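(* $\eta^{(1)}=\frac nN$. Moreover, for an $(N,n)$ dual pair $(F,G)$ for $\mathcal H$: (i) $(F,G)\in\mathcal N^{(1)}$ if and only if $\|f_i\|\,\|g_i\|=\frac nN$ for all $1\le i\le N$; (ii) if $(F,G)\in\mathcal N^{(1)}$, then $\langle f_i,g_i\rangle=\frac nN$ for all $1\le i\le N$; the converse does not hold in general.
   Context: $\mathcal H$ is a complex Hilbert space of finite dimension $n$, inner product linear in the first argument, $N\ge n$. A finite sequence $F=\{f_i\}_{i=1}^N$ is a frame if there are $0<A\le B$ with $A\|f\|^2\le\sum_i|\langle f,f_i\rangle|^2\le B\|f\|^2$ for all $f$. $G=\{g_i\}_{i=1}^N$ is a dual of $F$ if $f=\sum_i\langle f,g_i\rangle f_i$ for all $f$; $(F,G)$ is then an $(N,n)$ dual pair. $E_{\Lambda,F,G}f=\sum_{i\in\Lambda}\langle f,f_i\rangle g_i$ for $\Lambda\subseteq\{1,\dots,N\}$. The numerical radius is $\omega(T)=\sup\{|\langle Tf,f\rangle|:\|f\|=1\}$; $\eta^{(1)}_{F,G}=\max_{1\le i\le N}\omega(E_{\{i\},F,G})$; $\eta^{(1)}=\inf\{\eta^{(1)}_{F,G}:(F,G)\text{ an }(N,n)\text{ dual pair}\}$; $\mathcal N^{(1)}=\{(F,G):\eta^{(1)}_{F,G}=\eta^{(1)}\}$. *)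

theory Defs
  imports Complex_Main "Jordan_Normal_Form.Matrix"
begin

text \<open>The n-dimensional complex Hilbert space is modelled as carrier_vec n (complex column
vectors of length n) with the standard inner product  f \<bullet>c g = sum_j f_j * cnj (g_j),
which is linear in the first argument.  Frame sequences are indexed by {1..N}.\<close>

definition ip :: "complex vec \<Rightarrow> complex vec \<Rightarrow> complex" where
  "ip f g = f \<bullet>c g"

definition vnorm :: "complex vec \<Rightarrow> real" where
  "vnorm f = sqrt (Re (ip f f))"

definition is_frame :: "nat \<Rightarrow> nat \<Rightarrow> (nat \<Rightarrow> complex vec) \<Rightarrow> bool" where
  "is_frame n N F \<longleftrightarrow> (\<forall>i\<in>{1..N}. F i \<in> carrier_vec n) \<and>
     (\<exists>A B. 0 < A \<and> A \<le> B \<and>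
        (\<forall>f\<in>carrier_vec n.
           A * (vnorm f)\<^sup>2 \<le> (\<Sum>i\<in>{1..N}. (cmod (ip f (F i)))\<^sup>2) \<and>
           (\<Sum>i\<in>{1..N}. (cmod (ip f (F i)))\<^sup>2) \<le> B * (vnorm f)\<^sup>2))"

definition is_dual :: "nat \<Rightarrow> nat \<Rightarrow> (nat \<Rightarrow> complex vec) \<Rightarrow> (nat \<Rightarrow> complex vec) \<Rightarrow> bool" where
  "is_dual n N F G \<longleftrightarrow> (\<forall>i\<in>{1..N}. G i \<in> carrier_vec n) \<and>
     (\<forall>f\<in>carrier_vec n.
        f = finsum_vec TYPE(complex) n (\<lambda>i. ip f (G i) \<cdot>\<^sub>v F i) {1..N})"

definition dual_pair :: "nat \<Rightarrow> nat \<Rightarrow> (nat \<Rightarrow> complex vec) \<Rightarrow> (nat \<Rightarrow> complex vec) \<Rightarrow> bool" where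
  "dual_pair n N F G \<longleftrightarrow> is_frame n N F \<and> is_dual n N F G"

definition E_op :: "nat \<Rightarrow> nat set \<Rightarrow> (nat \<Rightarrow> complex vec) \<Rightarrow> (nat \<Rightarrow> complex vec)
    \<Rightarrow> complex vec \<Rightarrow> complex vec" where
  "E_op n \<Lambda> F G f = finsum_vec TYPE(complex) n (\<lambda>i. ip f (F i) \<cdot>\<^sub>v G i) \<Lambda>"

definition num_radius :: "nat \<Rightarrow> (complex vec \<Rightarrow> complex vec) \<Rightarrow> real" where
  "num_radius n T = Sup {cmod (ip (T f) f) | f. f \<in> carrier_vec n \<and> vnorm f = 1}"

definition eta1_FG :: "nat \<Rightarrow> nat \<Rightarrow> (nat \<Rightarrow> complex vec) \<Rightarrow> (nat \<Rightarrow> complex vec) \<Rightarrow> real" where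
  "eta1_FG n N F G = Max {num_radius n (E_op n {i} F G) | i. i \<in> {1..N}}"

definition eta1 :: "nat \<Rightarrow> nat \<Rightarrow> real" where
  "eta1 n N = Inf {eta1_FG n N F G | F G. dual_pair n N F G}"

definition N1 :: "nat \<Rightarrow> nat \<Rightarrow> ((nat \<Rightarrow> complex vec) \<times> (nat \<Rightarrow> complex vec)) set" where
  "N1 n N = {(F, G). dual_pair n N F G \<and> eta1_FG n N F G = eta1 n N}"

end

theory Submission
  imports Defs "HOL-Analysis.L2_Norm"
begin

text \<open>The operators \<open>E\<^sub>i = E\<^bsub>{i},F,G\<^esub>\<close> are rank one, \<open>f \<mapsto> \<langle>f, f\<^sub>i\<rangle> g\<^sub>i\<close>, and the numerical
  radius of such an operator lies between \<open>(|\<langle>f\<^sub>i, g\<^sub>i\<rangle>| + \<parallel>f\<^sub>i\<parallel> \<parallel>g\<^sub>i\<parallel>) / 2\<close> and \<open>\<parallel>f\<^sub>i\<parallel> \<parallel>g\<^sub>i\<parallel>\<close>.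
  Duality gives \<open>\<Sum>\<^sub>i \<langle>f\<^sub>i, g\<^sub>i\<rangle> = tr id = n\<close>, hence \<open>n \<le> \<Sum>\<^sub>i |\<langle>f\<^sub>i, g\<^sub>i\<rangle>| \<le> N \<eta>\<^sub>F\<^sub>,\<^sub>G\<close>.
  If \<open>\<eta>\<^sub>F\<^sub>,\<^sub>G = n/N\<close>, all these inequalities are tight, which forces
  \<open>|\<langle>f\<^sub>i, g\<^sub>i\<rangle>| = \<parallel>f\<^sub>i\<parallel> \<parallel>g\<^sub>i\<parallel> = n/N\<close>; as the \<open>\<langle>f\<^sub>i, g\<^sub>i\<rangle>\<close> add up to the positive real \<open>n\<close> with no
  loss in the triangle inequality, each of them equals \<open>n/N\<close>. The bound \<open>n/N\<close> is attained by the
  harmonic frame, a self-dual frame all of whose vectors have norm \<open>\<surd>(n/N)\<close>.\<close>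

lemma ip_eq_sum: "v \<in> carrier_vec n \<Longrightarrow> ip u v = (\<Sum>j<n. u$j * cnj (v$j))"
  unfolding ip_def scalar_prod_def by (auto intro!: sum.cong simp: lessThan_atLeast0)

lemma ip_swap: "u \<in> carrier_vec n \<Longrightarrow> v \<in> carrier_vec n \<Longrightarrow> ip v u = cnj (ip u v)"
  by (simp add: ip_eq_sum mult.commute)

lemma ip_self_eq_sum: "v \<in> carrier_vec n \<Longrightarrow> ip v v = of_real (\<Sum>j<n. (cmod (v$j))\<^sup>2)"
  unfolding of_real_sum ip_eq_sum by (rule sum.cong, simp, simp only: complex_norm_square)

lemma vnorm_eq_L2_set: "v \<in> carrier_vec n \<Longrightarrow> vnorm v = L2_set (\<lambda>j. cmod (v$j)) {..<n}"
  by (simp add: vnorm_def L2_set_def ip_self_eq_sum del: of_real_sum)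

lemma vnorm_nonneg: "vnorm v \<ge> 0"
  using vnorm_eq_L2_set[OF carrier_vec_dim_vec] by (simp add: L2_set_nonneg)

lemma ip_self: "v \<in> carrier_vec n \<Longrightarrow> ip v v = of_real ((vnorm v)\<^sup>2)"
  by (simp add: ip_self_eq_sum vnorm_eq_L2_set L2_set_def sum_nonneg del: of_real_sum)

lemma cmod_ip_le: "u \<in> carrier_vec n \<Longrightarrow> v \<in> carrier_vec n \<Longrightarrow> cmod (ip u v) \<le> vnorm u * vnorm v"
proof -
  assume u: "u \<in> carrier_vec n" and v: "v \<in> carrier_vec n"
  have "cmod (ip u v) \<le> (\<Sum>j<n. cmod (u$j * cnj (v$j)))"
    unfolding ip_eq_sum[OF v] by (rule norm_sum)
  also have "\<dots> = (\<Sum>j<n. \<bar>cmod (u$j)\<bar> * \<bar>cmod (v$j)\<bar>)" by (simp add: norm_mult)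
  also have "\<dots> \<le> vnorm u * vnorm v"
    unfolding vnorm_eq_L2_set[OF u] vnorm_eq_L2_set[OF v] by (rule L2_set_mult_ineq)
  finally show ?thesis .
qed

lemma ip_smult_left: "v \<in> carrier_vec n \<Longrightarrow> u \<in> carrier_vec n \<Longrightarrow> ip (c \<cdot>\<^sub>v u) v = c * ip u v"
  by (simp add: ip_eq_sum sum_distrib_left mult.assoc)

lemma ip_smult_right: "v \<in> carrier_vec n \<Longrightarrow> u \<in> carrier_vec n \<Longrightarrow> ip u (c \<cdot>\<^sub>v v) = cnj c * ip u v"
  by (simp add: ip_eq_sum sum_distrib_left algebra_simps)

lemma ip_add_left: "v \<in> carrier_vec n \<Longrightarrow> u \<in> carrier_vec n \<Longrightarrow> w \<in> carrier_vec n \<Longrightarrow>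
   ip (u + w) v = ip u v + ip w v"
  by (simp add: ip_eq_sum sum.distrib algebra_simps)

lemma ip_add_right: "v \<in> carrier_vec n \<Longrightarrow> u \<in> carrier_vec n \<Longrightarrow> w \<in> carrier_vec n \<Longrightarrow>
   ip v (u + w) = ip v u + ip v w"
  by (simp add: ip_swap[of _ n v] ip_add_left)

lemma ip_unit_vec_left: "k < n \<Longrightarrow> g \<in> carrier_vec n \<Longrightarrow> ip (unit_vec n k) g = cnj (g $ k)"
proof -
  assume k: "k < n" and g: "g \<in> carrier_vec n"
  have "ip (unit_vec n k) g = (\<Sum>j<n. if j = k then cnj (g $ k) else 0)"
    unfolding ip_eq_sum[OF g] by (rule sum.cong) (use k in auto)
  then show ?thesis using k by simp
qed

lemma vnorm_unit_vec: "k < n \<Longrightarrow> vnorm (unit_vec n k) = 1"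
  using ip_unit_vec_left[of k n "unit_vec n k"] by (simp add: vnorm_def)

lemma index_finsum_smult:
  "finite I \<Longrightarrow> (\<And>i. i \<in> I \<Longrightarrow> u i \<in> carrier_vec n) \<Longrightarrow> j < n \<Longrightarrow>
   finsum_vec TYPE(complex) n (\<lambda>i. c i \<cdot>\<^sub>v u i) I $ j = (\<Sum>i\<in>I. c i * u i $ j)"
  by (subst index_finsum_vec) (auto intro!: sum.cong, metis carrier_vecD index_smult_vec(1))

lemma finsum_smult_carrier: "(\<And>i. i \<in> I \<Longrightarrow> u i \<in> carrier_vec n) \<Longrightarrow>
   finsum_vec TYPE(complex) n (\<lambda>i. c i \<cdot>\<^sub>v u i) I \<in> carrier_vec n"
  by (rule finsum_vec_closed) auto

lemma ip_finsum_left: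
  "finite I \<Longrightarrow> (\<And>i. i \<in> I \<Longrightarrow> u i \<in> carrier_vec n) \<Longrightarrow> w \<in> carrier_vec n \<Longrightarrow>
   ip (finsum_vec TYPE(complex) n (\<lambda>i. c i \<cdot>\<^sub>v u i) I) w = (\<Sum>i\<in>I. c i * ip (u i) w)"
  by (simp add: ip_eq_sum index_finsum_smult sum_distrib_left sum_distrib_right mult.assoc
      sum.swap[of _ I])

lemma finsum_smult_eqI:
  assumes "finite I" "\<And>i. i \<in> I \<Longrightarrow> u i \<in> carrier_vec n" "v \<in> carrier_vec n"
    and "\<And>j. j < n \<Longrightarrow> (\<Sum>i\<in>I. c i * u i $ j) = v $ j"
  shows "v = finsum_vec TYPE(complex) n (\<lambda>i. c i \<cdot>\<^sub>v u i) I"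
  by (rule eq_vecI) (use assms finsum_smult_carrier[of I u n c] in \<open>auto simp: index_finsum_smult\<close>)

lemma E_op_singleton: "G i \<in> carrier_vec n \<Longrightarrow> E_op n {i} F G = (\<lambda>u. ip u (F i) \<cdot>\<^sub>v G i)"
  by (intro ext, unfold E_op_def, rule finsum_smult_eqI[symmetric]) auto

section \<open>Numerical radius of a rank-one operator\<close>

lemma exists_unit_vec_rescaled:
  assumes v: "v \<in> carrier_vec n" and x: "x \<in> carrier_vec n" and y: "y \<in> carrier_vec n"
    and pos: "vnorm v > 0"
  shows "\<exists>f\<in>carrier_vec n. vnorm f = 1 \<and>
           cmod (ip f x * ip y f) = cmod (ip v x * ip y v) / (vnorm v)\<^sup>2"
proof -
  define c where "c = complex_of_real (1 / vnorm v)"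
  define f where "f = c \<cdot>\<^sub>v v"
  have f: "f \<in> carrier_vec n" unfolding f_def using v by simp
  have "ip f f = c * c * ip v v" unfolding f_def using v
    by (simp add: ip_smult_left[of _ n] ip_smult_right[of _ n] c_def)
  also have "\<dots> = 1" unfolding c_def ip_self[OF v] using pos
    by (simp add: field_simps power2_eq_square)
  finally have "vnorm f = 1" unfolding vnorm_def by simp
  moreover have "ip f x * ip y f = c * c * (ip v x * ip y v)" unfolding f_def using v x y
    by (simp add: ip_smult_left[of _ n] ip_smult_right[of _ n] c_def)
  then have "cmod (ip f x * ip y f) = cmod (ip v x * ip y v) / (vnorm v)\<^sup>2"
    unfolding c_def using pos by (simp add: norm_mult norm_divide power2_eq_square)
  ultimately show ?thesis using f by blast
qed

text \<open>Writing \<open>\<langle>y, x\<rangle> = r e\<^sup>i\<^sup>\<theta>\<close>, the witness is \<open>v = \<parallel>y\<parallel> x + \<parallel>x\<parallel> e\<^sup>-\<^sup>i\<^sup>\<theta> y\<close>; then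
  \<open>\<langle>v, x\<rangle> \<langle>y, v\<rangle> = \<parallel>x\<parallel> \<parallel>y\<parallel> e\<^sup>i\<^sup>\<theta> (\<parallel>x\<parallel> \<parallel>y\<parallel> + r)\<^sup>2\<close> and \<open>\<parallel>v\<parallel>\<^sup>2 = 2 \<parallel>x\<parallel> \<parallel>y\<parallel> (\<parallel>x\<parallel> \<parallel>y\<parallel> + r)\<close>.\<close>

lemma exists_unit_vec_rank_one:
  assumes x: "x \<in> carrier_vec n" and y: "y \<in> carrier_vec n" and pos: "vnorm x * vnorm y > 0"
  shows "\<exists>f\<in>carrier_vec n. vnorm f = 1 \<and>
           cmod (ip f x * ip y f) = (cmod (ip y x) + vnorm x * vnorm y) / 2"
proof -
  define a where "a = vnorm x"
  define b where "b = vnorm y"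
  define r where "r = cmod (ip y x)"
  define c where "c = cis (Arg (ip y x))"
  have ab: "a * b > 0" using pos unfolding a_def b_def .
  have r0: "r \<ge> 0" unfolding r_def by simp
  have cc: "c * cnj c = 1" unfolding c_def by (simp add: cis_cnj cis_mult)
  have yx: "ip y x = of_real r * c" unfolding r_def c_def by (metis rcis_cmod_Arg rcis_def)
  have xy: "ip x y = of_real r * cnj c" using ip_swap[OF y x] yx by simp
  have xx: "ip x x = of_real (a * a)" unfolding a_def by (simp add: ip_self[OF x] power2_eq_square)
  have yy: "ip y y = of_real (b * b)" unfolding b_def by (simp add: ip_self[OF y] power2_eq_square)
  define v where "v = of_real b \<cdot>\<^sub>v x + (of_real a * cnj c) \<cdot>\<^sub>v y"
  have v: "v \<in> carrier_vec n" unfolding v_def using x y by simp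
  have "ip v x = of_real b * ip x x + of_real a * cnj c * ip y x"
    unfolding v_def using x y by (simp add: ip_add_left[of _ n] ip_smult_left[of _ n])
  then have vx: "ip v x = of_real (a * (a * b + r))"
    unfolding xx yx using cc by (simp add: algebra_simps)
  have "ip y v = of_real b * ip y x + of_real a * c * ip y y"
    unfolding v_def using x y by (simp add: ip_add_right[of _ n] ip_smult_right[of _ n])
  then have yv: "ip y v = c * of_real (b * (a * b + r))"
    unfolding yx yy by (simp add: algebra_simps)
  have "ip x v = of_real b * ip x x + of_real a * c * ip x y"
    unfolding v_def using x y by (simp add: ip_add_right[of _ n] ip_smult_right[of _ n])
  then have xv: "ip x v = of_real (a * (a * b + r))"
    unfolding xx xy using cc by (simp add: algebra_simps)
  have "ip v v = of_real b * ip x v + of_real a * cnj c * ip y v"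
    unfolding v_def using x y v by (simp add: ip_add_left[of _ n] ip_smult_left[of _ n])
  also have "\<dots> = of_real b * of_real (a * (a * b + r)) + of_real a * (c * cnj c) * of_real (b * (a * b + r))"
    unfolding xv yv by (simp add: algebra_simps)
  also have "\<dots> = of_real (2 * (a * b) * (a * b + r))"
    unfolding cc by (simp add: algebra_simps)
  finally have vv: "(vnorm v)\<^sup>2 = 2 * (a * b) * (a * b + r)"
    using ip_self[OF v] by (metis of_real_eq_iff)
  have D: "2 * (a * b) * (a * b + r) > 0" using ab r0 by simp
  then have "vnorm v > 0" using vv vnorm_nonneg[of v]
    by (metis less_eq_real_def power_zero_numeral zero_less_numeral)
  have "a \<ge> 0" "b \<ge> 0" unfolding a_def b_def by (rule vnorm_nonneg)+
  then have "cmod (ip v x * ip y v) = a * b * (a * b + r)\<^sup>2"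
    unfolding vx yv norm_mult norm_of_real c_def using r0 by (simp add: power2_eq_square)
  then have "cmod (ip v x * ip y v) / (vnorm v)\<^sup>2 = (r + a * b) / 2"
    unfolding vv using D by (simp add: field_simps power2_eq_square)
  with exists_unit_vec_rescaled[OF v x y \<open>vnorm v > 0\<close>] show ?thesis
    unfolding r_def a_def b_def by (metis add.commute)
qed

lemma num_radius_rank_one:
  assumes n: "1 \<le> n" and x: "x \<in> carrier_vec n" and y: "y \<in> carrier_vec n"
  shows "(cmod (ip x y) + vnorm x * vnorm y) / 2 \<le> num_radius n (\<lambda>u. ip u x \<cdot>\<^sub>v y)"
    and "num_radius n (\<lambda>u. ip u x \<cdot>\<^sub>v y) \<le> vnorm x * vnorm y"
proof -
  define S where "S = {cmod (ip f x * ip y f) | f. f \<in> carrier_vec n \<and> vnorm f = 1}"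
  have "ip (ip f x \<cdot>\<^sub>v y) f = ip f x * ip y f" if "f \<in> carrier_vec n" for f
    using that y by (simp add: ip_smult_left[of _ n])
  then have nr: "num_radius n (\<lambda>u. ip u x \<cdot>\<^sub>v y) = Sup S"
    unfolding num_radius_def S_def by (metis (no_types, lifting))
  have ub: "s \<le> vnorm x * vnorm y" if "s \<in> S" for s
  proof -
    obtain f where f: "f \<in> carrier_vec n" "vnorm f = 1" and s: "s = cmod (ip f x * ip y f)"
      using \<open>s \<in> S\<close> unfolding S_def by blast
    have "s = cmod (ip f x) * cmod (ip y f)" unfolding s by (simp add: norm_mult)
    also have "\<dots> \<le> (vnorm f * vnorm x) * (vnorm y * vnorm f)"
      by (rule mult_mono) (use cmod_ip_le[OF f(1) x] cmod_ip_le[OF y f(1)] vnorm_nonneg in auto)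
    finally show ?thesis using f by simp
  qed
  have ne: "cmod (ip (unit_vec n 0) x * ip y (unit_vec n 0)) \<in> S"
    unfolding S_def using vnorm_unit_vec[of 0 n] n by auto
  have bdd: "bdd_above S" using ub by (rule bdd_aboveI)
  show "num_radius n (\<lambda>u. ip u x \<cdot>\<^sub>v y) \<le> vnorm x * vnorm y"
    unfolding nr using ne ub by (intro cSup_least) auto
  show "(cmod (ip x y) + vnorm x * vnorm y) / 2 \<le> num_radius n (\<lambda>u. ip u x \<cdot>\<^sub>v y)"
  proof (cases "vnorm x * vnorm y > 0")
    case True
    have "cmod (ip y x) = cmod (ip x y)" using ip_swap[OF x y] by simp
    then have "(cmod (ip x y) + vnorm x * vnorm y) / 2 \<in> S"
      using exists_unit_vec_rank_one[OF x y True] unfolding S_def by force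
    then show ?thesis unfolding nr using bdd by (rule cSup_upper)
  next
    case False
    then have "vnorm x * vnorm y = 0"
      using vnorm_nonneg[of x] vnorm_nonneg[of y] by (simp add: zero_less_mult_iff)
    then have "cmod (ip x y) + vnorm x * vnorm y \<le> 0"
      using cmod_ip_le[OF x y] by linarith
    moreover have "0 \<le> Sup S"
      using cSup_upper[OF ne bdd] by (meson norm_ge_zero order_trans)
    ultimately show ?thesis unfolding nr by simp
  qed
qed

section \<open>Trace and frame bounds of a dual pair\<close>

lemma dual_trace:
  assumes F: "\<forall>i\<in>{1..N}. F i \<in> carrier_vec n" and D: "is_dual n N F G"
  shows "(\<Sum>i\<in>{1..N}. ip (F i) (G i)) = of_nat n"
proof -
  have G: "\<forall>i\<in>{1..N}. G i \<in> carrier_vec n"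
    and rec: "\<forall>f\<in>carrier_vec n. f = finsum_vec TYPE(complex) n (\<lambda>i. ip f (G i) \<cdot>\<^sub>v F i) {1..N}"
    using D unfolding is_dual_def by blast+
  have diag: "(\<Sum>i\<in>{1..N}. F i $ k * cnj (G i $ k)) = 1" if k: "k < n" for k
  proof -
    have "1 = unit_vec n k $ k" using k by simp
    also have "\<dots> = finsum_vec TYPE(complex) n (\<lambda>i. ip (unit_vec n k) (G i) \<cdot>\<^sub>v F i) {1..N} $ k"
      using rec[rule_format, of "unit_vec n k"] by simp
    also have "\<dots> = (\<Sum>i\<in>{1..N}. ip (unit_vec n k) (G i) * F i $ k)"
      by (rule index_finsum_smult) (use F k in auto)
    also have "\<dots> = (\<Sum>i\<in>{1..N}. F i $ k * cnj (G i $ k))"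
      by (rule sum.cong) (use G k in \<open>auto simp: ip_unit_vec_left\<close>)
    finally show ?thesis by simp
  qed
  have "(\<Sum>i\<in>{1..N}. ip (F i) (G i)) = (\<Sum>i\<in>{1..N}. \<Sum>k<n. F i $ k * cnj (G i $ k))"
    by (rule sum.cong) (use G in \<open>auto simp: ip_eq_sum\<close>)
  also have "\<dots> = (\<Sum>k<n. \<Sum>i\<in>{1..N}. F i $ k * cnj (G i $ k))" by (rule sum.swap)
  also have "\<dots> = (\<Sum>k<n. 1)" by (rule sum.cong) (simp_all add: diag del: One_nat_def)
  finally show ?thesis by simp
qed

lemma sum_cmod_ip_sq_le:
  assumes "finite I" and u: "\<And>i. i \<in> I \<Longrightarrow> u i \<in> carrier_vec n" and f: "f \<in> carrier_vec n"
  shows "(\<Sum>i\<in>I. (cmod (ip f (u i)))\<^sup>2) \<le> (vnorm f)\<^sup>2 * (\<Sum>i\<in>I. (vnorm (u i))\<^sup>2)"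
proof -
  have "(\<Sum>i\<in>I. (cmod (ip f (u i)))\<^sup>2) \<le> (\<Sum>i\<in>I. (vnorm f * vnorm (u i))\<^sup>2)"
    by (intro sum_mono power_mono cmod_ip_le[OF f u]) auto
  then show ?thesis by (simp add: power_mult_distrib sum_distrib_left)
qed

text \<open>The lower frame bound: expand \<open>\<parallel>f\<parallel>\<^sup>2 = \<Sum>\<^sub>i \<langle>f, g\<^sub>i\<rangle> \<langle>f\<^sub>i, f\<rangle>\<close> and apply Cauchy--Schwarz twice.\<close>

lemma vnorm_sq_le_dual_sum:
  assumes F: "\<forall>i\<in>{1..N}. F i \<in> carrier_vec n" and D: "is_dual n N F G" and f: "f \<in> carrier_vec n"
  shows "(vnorm f)\<^sup>2 \<le> (\<Sum>i\<in>{1..N}. (vnorm (G i))\<^sup>2) * (\<Sum>i\<in>{1..N}. (cmod (ip f (F i)))\<^sup>2)"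
    (is "_ \<le> ?K * ?S")
proof -
  have G: "\<And>i. i \<in> {1..N} \<Longrightarrow> G i \<in> carrier_vec n" using D unfolding is_dual_def by blast
  have rec: "f = finsum_vec TYPE(complex) n (\<lambda>i. ip f (G i) \<cdot>\<^sub>v F i) {1..N}"
    using D f unfolding is_dual_def by blast
  have "(vnorm f)\<^sup>2 = Re (ip f f)" by (simp add: ip_self[OF f])
  also have "ip f f = (\<Sum>i\<in>{1..N}. ip f (G i) * ip (F i) f)"
    by (subst (1) rec) (rule ip_finsum_left, use F f in auto)
  also have "Re \<dots> \<le> (\<Sum>i\<in>{1..N}. cmod (ip f (G i) * ip (F i) f))"
    by (rule order_trans[OF complex_Re_le_cmod norm_sum])
  also have "\<dots> \<le> (\<Sum>i\<in>{1..N}. vnorm f * (\<bar>vnorm (G i)\<bar> * \<bar>cmod (ip f (F i))\<bar>))"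
  proof (rule sum_mono)
    fix i assume i: "i \<in> {1..N}"
    have "cmod (ip f (G i) * ip (F i) f) = cmod (ip f (G i)) * cmod (ip f (F i))"
      using ip_swap[OF f] F i by (simp add: norm_mult)
    also have "\<dots> \<le> vnorm f * vnorm (G i) * cmod (ip f (F i))"
      by (rule mult_right_mono) (use cmod_ip_le[OF f G[OF i]] in auto)
    finally show "cmod (ip f (G i) * ip (F i) f) \<le> vnorm f * (\<bar>vnorm (G i)\<bar> * \<bar>cmod (ip f (F i))\<bar>)"
      using vnorm_nonneg[of "G i"] by (simp add: mult.assoc)
  qed
  also have "\<dots> \<le> vnorm f * (L2_set (\<lambda>i. vnorm (G i)) {1..N} * L2_set (\<lambda>i. cmod (ip f (F i))) {1..N})"
    unfolding sum_distrib_left[symmetric] by (rule mult_left_mono[OF L2_set_mult_ineq vnorm_nonneg])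
  also have "\<dots> = vnorm f * sqrt (?K * ?S)" by (simp add: L2_set_def real_sqrt_mult)
  finally have main: "(vnorm f)\<^sup>2 \<le> vnorm f * sqrt (?K * ?S)" .
  have KS: "?K * ?S \<ge> 0" by (simp add: sum_nonneg)
  show ?thesis
  proof (cases "vnorm f = 0")
    case True then show ?thesis using KS by simp
  next
    case False
    then have "vnorm f \<le> sqrt (?K * ?S)"
      using main vnorm_nonneg[of f] by (simp add: power2_eq_square)
    then have "(vnorm f)\<^sup>2 \<le> (sqrt (?K * ?S))\<^sup>2" by (rule power_mono[OF _ vnorm_nonneg])
    then show ?thesis using KS by simp
  qed
qed

lemma dual_imp_frame:
  assumes F: "\<forall>i\<in>{1..N}. F i \<in> carrier_vec n" and D: "is_dual n N F G"
  shows "is_frame n N F"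
proof -
  define K where "K = (\<Sum>i\<in>{1..N}. (vnorm (G i))\<^sup>2)"
  define A where "A = 1 / (K + 1)"
  define B where "B = A + (\<Sum>i\<in>{1..N}. (vnorm (F i))\<^sup>2)"
  have K0: "K \<ge> 0" unfolding K_def by (simp add: sum_nonneg)
  have "A > 0" "A \<le> B" unfolding A_def B_def using K0 by (auto simp: sum_nonneg)
  moreover have "A * (vnorm f)\<^sup>2 \<le> (\<Sum>i\<in>{1..N}. (cmod (ip f (F i)))\<^sup>2) \<and>
      (\<Sum>i\<in>{1..N}. (cmod (ip f (F i)))\<^sup>2) \<le> B * (vnorm f)\<^sup>2" if f: "f \<in> carrier_vec n" for f
  proof
    define S where "S = (\<Sum>i\<in>{1..N}. (cmod (ip f (F i)))\<^sup>2)"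
    have S0: "S \<ge> 0" unfolding S_def by (simp add: sum_nonneg)
    have "A * (vnorm f)\<^sup>2 \<le> A * (K * S)"
      using vnorm_sq_le_dual_sum[OF F D f] \<open>A > 0\<close> unfolding K_def S_def by simp
    also have "\<dots> \<le> S" unfolding A_def using K0 S0 by (simp add: field_simps)
    finally show "A * (vnorm f)\<^sup>2 \<le> S" .
    have "S \<le> (vnorm f)\<^sup>2 * (\<Sum>i\<in>{1..N}. (vnorm (F i))\<^sup>2)"
      unfolding S_def by (rule sum_cmod_ip_sq_le) (use F f in auto)
    also have "\<dots> \<le> B * (vnorm f)\<^sup>2" unfolding B_def using \<open>A > 0\<close> by (simp add: algebra_simps)
    finally show "S \<le> B * (vnorm f)\<^sup>2" .
  qed
  ultimately show ?thesis using F unfolding is_frame_def by blast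
qed

section \<open>The lower bound and its equality case\<close>

lemma sum_squeeze_eq:
  fixes a b :: "'i \<Rightarrow> real"
  assumes "finite I" and "real (card I) * q \<le> (\<Sum>i\<in>I. a i)"
    and "\<And>i. i \<in> I \<Longrightarrow> a i \<le> b i" and "\<And>i. i \<in> I \<Longrightarrow> a i + b i \<le> 2 * q"
  shows "\<forall>i\<in>I. a i = q \<and> b i = q"
proof -
  have "(\<Sum>i\<in>I. 2 * q - (a i + b i)) + (\<Sum>i\<in>I. b i - a i) = 2 * (real (card I) * q - (\<Sum>i\<in>I. a i))"
    by (simp add: sum_subtractf sum.distrib sum_distrib_left sum_negf)
  moreover have "(\<Sum>i\<in>I. 2 * q - (a i + b i)) \<ge> 0" "(\<Sum>i\<in>I. b i - a i) \<ge> 0"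
    using assms(3,4) by (auto intro: sum_nonneg)
  ultimately have "(\<Sum>i\<in>I. 2 * q - (a i + b i)) = 0" "(\<Sum>i\<in>I. b i - a i) = 0"
    using assms(2) by argo+
  then have "\<forall>i\<in>I. 2 * q - (a i + b i) = 0" "\<forall>i\<in>I. b i - a i = 0"
    using assms by (simp_all add: sum_nonneg_eq_0_iff)
  then show ?thesis by auto
qed

lemma sum_cmod_le_Re_imp_real:
  fixes z :: "'i \<Rightarrow> complex"
  assumes "finite I" and "(\<Sum>i\<in>I. cmod (z i)) \<le> Re (\<Sum>i\<in>I. z i)"
  shows "\<forall>i\<in>I. z i = of_real (cmod (z i))"
proof
  fix i assume i: "i \<in> I"
  have "(\<Sum>i\<in>I. cmod (z i) - Re (z i)) = 0"
    using assms(2) sum_mono[of I "\<lambda>i. Re (z i)" "\<lambda>i. cmod (z i)"]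
    by (simp add: sum_subtractf Re_sum complex_Re_le_cmod)
  then have "Re (z i) = cmod (z i)"
    using i by (simp add: sum_nonneg_eq_0_iff[OF assms(1)] complex_Re_le_cmod)
  moreover have "(cmod (z i))\<^sup>2 = (Re (z i))\<^sup>2 + (Im (z i))\<^sup>2" by (rule cmod_power2)
  ultimately show "z i = of_real (cmod (z i))" by (simp add: complex_eq_iff)
qed

lemma num_radius_le_eta1_FG: "i \<in> {1..N} \<Longrightarrow> num_radius n (E_op n {i} F G) \<le> eta1_FG n N F G"
  unfolding eta1_FG_def by (rule Max_ge) auto

lemma eta1_FG_le_iff:
  "1 \<le> N \<Longrightarrow> eta1_FG n N F G \<le> c \<longleftrightarrow> (\<forall>i\<in>{1..N}. num_radius n (E_op n {i} F G) \<le> c)"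
  unfolding eta1_FG_def by (subst Max_le_iff; fastforce)

context
  fixes n N :: nat and F G :: "nat \<Rightarrow> complex vec"
  assumes n: "1 \<le> n" and nN: "n \<le> N" and dp: "dual_pair n N F G"
begin

lemma dual_pair_carrier: "i \<in> {1..N} \<Longrightarrow> F i \<in> carrier_vec n" "i \<in> {1..N} \<Longrightarrow> G i \<in> carrier_vec n"
  using dp unfolding dual_pair_def is_frame_def is_dual_def by blast+

lemma dual_pair_num_radius_bounds:
  assumes i: "i \<in> {1..N}"
  shows "(cmod (ip (F i) (G i)) + vnorm (F i) * vnorm (G i)) / 2 \<le> num_radius n (E_op n {i} F G)"
    and "num_radius n (E_op n {i} F G) \<le> vnorm (F i) * vnorm (G i)"
  using num_radius_rank_one[OF n dual_pair_carrier[OF i]]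
  by (simp_all add: E_op_singleton[of G i n F, OF dual_pair_carrier(2)[OF i]])

lemma dual_pair_sum_cmod_ip_ge: "real n \<le> (\<Sum>i\<in>{1..N}. cmod (ip (F i) (G i)))"
proof -
  have "(\<Sum>i\<in>{1..N}. ip (F i) (G i)) = of_nat n"
    using dual_trace dual_pair_carrier(1) dp unfolding dual_pair_def by blast
  then show ?thesis using norm_sum[of "\<lambda>i. ip (F i) (G i)" "{1..N}"] by simp
qed

lemma eta1_FG_ge: "real n / real N \<le> eta1_FG n N F G"
proof -
  have "real n \<le> (\<Sum>i\<in>{1..N}. num_radius n (E_op n {i} F G))"
  proof (rule order_trans[OF dual_pair_sum_cmod_ip_ge sum_mono])
    fix i assume i: "i \<in> {1..N}"
    show "cmod (ip (F i) (G i)) \<le> num_radius n (E_op n {i} F G)"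
      using dual_pair_num_radius_bounds[OF i] cmod_ip_le[OF dual_pair_carrier[OF i]] by argo
  qed
  also have "\<dots> \<le> real N * eta1_FG n N F G"
    using sum_bounded_above[of "{1..N}", OF num_radius_le_eta1_FG] by simp
  finally show ?thesis using n nN by (simp add: divide_le_eq mult.commute)
qed

lemma eta1_FG_eq_imp:
  assumes "eta1_FG n N F G = real n / real N"
  shows "\<forall>i\<in>{1..N}. cmod (ip (F i) (G i)) = real n / real N \<and>
                   vnorm (F i) * vnorm (G i) = real n / real N"
proof (rule sum_squeeze_eq)
  show "real (card {1..N}) * (real n / real N) \<le> (\<Sum>i\<in>{1..N}. cmod (ip (F i) (G i)))"
    using dual_pair_sum_cmod_ip_ge n nN by simp
  show "cmod (ip (F i) (G i)) \<le> vnorm (F i) * vnorm (G i)" if "i \<in> {1..N}" for i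
    using cmod_ip_le[OF dual_pair_carrier[OF that]] .
  show "cmod (ip (F i) (G i)) + vnorm (F i) * vnorm (G i) \<le> 2 * (real n / real N)"
    if "i \<in> {1..N}" for i
    using dual_pair_num_radius_bounds(1)[OF that] num_radius_le_eta1_FG[OF that, of n F G] assms by argo
qed simp

lemma eta1_FG_eq_iff:
  "eta1_FG n N F G = real n / real N \<longleftrightarrow>
     (\<forall>i\<in>{1..N}. vnorm (F i) * vnorm (G i) = real n / real N)"
proof
  assume "\<forall>i\<in>{1..N}. vnorm (F i) * vnorm (G i) = real n / real N"
  then have "eta1_FG n N F G \<le> real n / real N"
    using n nN dual_pair_num_radius_bounds(2) by (subst eta1_FG_le_iff) auto
  then show "eta1_FG n N F G = real n / real N" using eta1_FG_ge by simp
qed (use eta1_FG_eq_imp in blast)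

lemma ip_eq_of_eta1_FG_eq:
  assumes "eta1_FG n N F G = real n / real N"
  shows "\<forall>i\<in>{1..N}. ip (F i) (G i) = of_real (real n / real N)"
proof -
  have cm: "\<forall>i\<in>{1..N}. cmod (ip (F i) (G i)) = real n / real N"
    using eta1_FG_eq_imp[OF assms] by blast
  have "(\<Sum>i\<in>{1..N}. ip (F i) (G i)) = of_nat n"
    using dual_trace dual_pair_carrier(1) dp unfolding dual_pair_def by blast
  moreover have "(\<Sum>i\<in>{1..N}. cmod (ip (F i) (G i))) = real n" using cm n nN by simp
  ultimately have "\<forall>i\<in>{1..N}. ip (F i) (G i) = of_real (cmod (ip (F i) (G i)))"
    by (intro sum_cmod_le_Re_imp_real) simp_all
  then show ?thesis using cm by simp
qed

end

section \<open>The harmonic frame\<close>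

lemma cis_2pi_fraction_ne_1:
  fixes d :: int
  assumes "d \<noteq> 0" "\<bar>d\<bar> < int N"
  shows "cis (2 * pi * real_of_int d / real N) \<noteq> 1"
proof
  assume "cis (2 * pi * real_of_int d / real N) = 1"
  then have "cos (2 * pi * real_of_int d / real N) = 1" by (simp add: complex_eq_iff)
  then obtain m :: int where m: "2 * pi * real_of_int d / real N = real_of_int m * 2 * pi"
    using cos_one_2pi_int by blast
  have "real N > 0" using assms by simp
  then have "real_of_int d = real_of_int m * real N" using m by (simp add: field_simps)
  then have "d = m * int N" by (metis of_int_eq_iff of_int_mult of_int_of_nat_eq)
  then show False using assms by (cases "m = 0") (auto simp: abs_mult)
qed

lemma sum_cis_orthogonal:
  assumes j: "j < N" and k: "k < N"
  shows "(\<Sum>i\<in>{1..N}. cis (2*pi*real i*real k/real N) * cnj (cis (2*pi*real i*real j/real N)))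
         = (if j = k then of_nat N else 0)"
proof -
  define d :: int where "d = int k - int j"
  define z where "z = cis (2 * pi * real_of_int d / real N)"
  have N0: "real N > 0" using j by simp
  have powers: "cis (2*pi*real i*real k/real N) * cnj (cis (2*pi*real i*real j/real N)) = z ^ i" for i
    unfolding z_def d_def cis_cnj cis_mult DeMoivre
    by (rule arg_cong[where f=cis]) (use N0 in \<open>simp add: field_simps\<close>)
  show ?thesis
  proof (cases "j = k")
    case True
    then show ?thesis unfolding powers z_def d_def by simp
  next
    case False
    have "z \<noteq> 1" unfolding z_def by (rule cis_2pi_fraction_ne_1) (use False j k in \<open>auto simp: d_def\<close>)
    have "z ^ N = cis (2 * pi * real_of_int d)" unfolding z_def DeMoivre
      by (rule arg_cong[where f=cis]) (use N0 in \<open>simp add: field_simps\<close>)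
    then have "z ^ N = 1" by simp
    then have "(1 - z) * (\<Sum>i\<in>{1..N}. z ^ i) = 0" using sum_gp_multiplied[of 1 N z] j by simp
    then show ?thesis unfolding powers using False \<open>z \<noteq> 1\<close> by simp
  qed
qed

definition harmonic_frame :: "nat \<Rightarrow> nat \<Rightarrow> nat \<Rightarrow> complex vec" where
  "harmonic_frame n N i = vec n (\<lambda>j. of_real (1 / sqrt (real N)) * cis (2*pi*real i*real j/real N))"

lemma harmonic_frame_carrier: "harmonic_frame n N i \<in> carrier_vec n"
  unfolding harmonic_frame_def by simp

lemma vnorm_harmonic_frame:
  assumes "N > 0"
  shows "vnorm (harmonic_frame n N i) * vnorm (harmonic_frame n N i) = real n / real N"
proof -
  have "(\<Sum>j<n. (cmod (harmonic_frame n N i $ j))\<^sup>2) = real n / real N"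
    using assms by (simp add: harmonic_frame_def norm_mult norm_divide power2_eq_square)
  then show ?thesis
    by (simp add: vnorm_eq_L2_set[OF harmonic_frame_carrier] L2_set_def)
qed

text \<open>The rows \<open>0, \<dots>, n-1\<close> of the \<open>N \<times> N\<close> Fourier matrix are orthonormal, so its
  columns form a Parseval frame for \<open>\<complex>\<^sup>n\<close>, i.e.\ a self-dual frame.\<close>

lemma harmonic_frame_self_dual:
  assumes "n \<le> N"
  shows "is_dual n N (harmonic_frame n N) (harmonic_frame n N)"
  unfolding is_dual_def
proof (intro conjI ballI harmonic_frame_carrier finsum_smult_eqI)
  fix u :: "complex vec" and k assume u: "u \<in> carrier_vec n" and k: "k < n"
  define c where "c = complex_of_real (1 / sqrt (real N))"
  define e where "e i j = cis (2*pi*real i*real j/real N)" for i j :: nat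
  have N0: "real N > 0" using assms k by simp
  have cc: "c * c * of_nat N = 1" unfolding c_def using N0 by (simp flip: of_real_mult)
  have entry: "harmonic_frame n N i $ j = c * e i j" if "j < n" for i j
    using that unfolding harmonic_frame_def c_def e_def by simp
  have "(\<Sum>i\<in>{1..N}. ip u (harmonic_frame n N i) * harmonic_frame n N i $ k)
      = (\<Sum>i\<in>{1..N}. \<Sum>j<n. u $ j * (c * c) * (e i k * cnj (e i j)))"
    by (rule sum.cong)
      (simp_all add: ip_eq_sum[OF harmonic_frame_carrier] entry k sum_distrib_left c_def algebra_simps)
  also have "\<dots> = (\<Sum>j<n. u $ j * (c * c) * (\<Sum>i\<in>{1..N}. e i k * cnj (e i j)))"
    by (subst sum.swap) (simp add: sum_distrib_left)
  also have "\<dots> = (\<Sum>j<n. u $ j * (c * c) * (if j = k then of_nat N else 0))"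
    using sum_cis_orthogonal[of _ N k] k assms unfolding e_def by (intro sum.cong) auto
  also have "\<dots> = u $ k * (c * c * of_nat N)" using k by (simp add: if_distrib cong: if_cong)
  finally show "(\<Sum>i\<in>{1..N}. ip u (harmonic_frame n N i) * harmonic_frame n N i $ k) = u $ k"
    using cc by simp
qed (auto simp: harmonic_frame_carrier)

lemma dual_pair_harmonic_frame:
  "n \<le> N \<Longrightarrow> dual_pair n N (harmonic_frame n N) (harmonic_frame n N)"
  unfolding dual_pair_def
  using dual_imp_frame harmonic_frame_self_dual harmonic_frame_carrier by blast

lemma eta1_eq:
  assumes n: "1 \<le> n" and nN: "n \<le> N"
  shows "eta1 n N = real n / real N"
  unfolding eta1_def
proof (rule cInf_eq_minimum)
  have "eta1_FG n N (harmonic_frame n N) (harmonic_frame n N) = real n / real N"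
    using eta1_FG_eq_iff[OF n nN dual_pair_harmonic_frame[OF nN]] vnorm_harmonic_frame nN n by simp
  then show "real n / real N \<in> {eta1_FG n N F G |F G. dual_pair n N F G}"
    using dual_pair_harmonic_frame[OF nN] by force
qed (use eta1_FG_ge[OF n nN] in blast)

lemma mem_N1_iff:
  assumes "1 \<le> n" "n \<le> N" "dual_pair n N F G"
  shows "(F, G) \<in> N1 n N \<longleftrightarrow> eta1_FG n N F G = real n / real N"
  using assms by (simp add: N1_def eta1_eq)

section \<open>Tightness of the inner products is not sufficient\<close>

text \<open>A dual pair in \<open>\<complex>\<^sup>2\<close> with \<open>N = 2\<close> and \<open>\<langle>f\<^sub>i, g\<^sub>i\<rangle> = 1\<close>, but \<open>\<parallel>f\<^sub>1\<parallel> \<parallel>g\<^sub>1\<parallel> = \<surd>2\<close>: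
  \<open>f\<^sub>1 = (1, 0)\<close>, \<open>f\<^sub>2 = (1, 1)\<close>, \<open>g\<^sub>1 = (1, -1)\<close>, \<open>g\<^sub>2 = (0, 1)\<close>.\<close>

definition skew_frame :: "nat \<Rightarrow> complex vec" where
  "skew_frame i = (if i = 1 then vec 2 (\<lambda>j. if j = 0 then 1 else 0) else vec 2 (\<lambda>j. 1))"

definition skew_dual :: "nat \<Rightarrow> complex vec" where
  "skew_dual i = (if i = 1 then vec 2 (\<lambda>j. if j = 0 then 1 else -1) else vec 2 (\<lambda>j. if j = 0 then 0 else 1))"

lemma skew_frame_carrier: "skew_frame i \<in> carrier_vec 2"
  and skew_dual_carrier: "skew_dual i \<in> carrier_vec 2"
  unfolding skew_frame_def skew_dual_def by simp_all

lemma sum_lessThan_2: "(\<Sum>j<(2::nat). f j) = f 0 + (f 1 :: 'a :: comm_monoid_add)"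
  by (simp add: numeral_2_eq_2)

lemma sum_1_to_2: "(\<Sum>i\<in>{1..2::nat}. f i) = f 1 + (f 2 :: 'a :: comm_monoid_add)"
  by (simp add: numeral_2_eq_2)

lemma ip_skew_dual: "u \<in> carrier_vec 2 \<Longrightarrow> ip u (skew_dual 1) = u $ 0 - u $ 1"
    "u \<in> carrier_vec 2 \<Longrightarrow> ip u (skew_dual 2) = u $ 1"
  unfolding ip_eq_sum[OF skew_dual_carrier] sum_lessThan_2 by (simp_all add: skew_dual_def)

lemma dual_pair_skew: "dual_pair 2 2 skew_frame skew_dual"
proof -
  have "is_dual 2 2 skew_frame skew_dual"
    unfolding is_dual_def
  proof (intro conjI ballI skew_dual_carrier finsum_smult_eqI)
    fix u :: "complex vec" and k :: nat assume "u \<in> carrier_vec 2" "k < 2"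
    then show "(\<Sum>i\<in>{1..2}. ip u (skew_dual i) * skew_frame i $ k) = u $ k"
      unfolding sum_1_to_2 by (cases k) (auto simp: ip_skew_dual[simplified] skew_frame_def)
  qed (auto simp: skew_frame_carrier)
  then show ?thesis unfolding dual_pair_def using dual_imp_frame skew_frame_carrier by blast
qed

lemma ip_skew_frame_dual: "i \<in> {1..2} \<Longrightarrow> ip (skew_frame i) (skew_dual i) = 1"
  unfolding ip_eq_sum[OF skew_dual_carrier] sum_lessThan_2
  by (auto simp: skew_frame_def skew_dual_def)

lemma skew_not_in_N1: "(skew_frame, skew_dual) \<notin> N1 2 2"
proof
  assume "(skew_frame, skew_dual) \<in> N1 2 2"
  then have "vnorm (skew_frame 1) * vnorm (skew_dual 1) = 1"
    using mem_N1_iff[OF _ _ dual_pair_skew] eta1_FG_eq_iff[OF _ _ dual_pair_skew] by simp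
  moreover have "vnorm (skew_frame 1) = 1" "vnorm (skew_dual 1) = sqrt 2"
    unfolding vnorm_def ip_eq_sum[OF skew_frame_carrier] ip_eq_sum[OF skew_dual_carrier] sum_lessThan_2
    by (simp_all add: skew_frame_def skew_dual_def)
  ultimately show False by simp
qed

theorem theorem5p1:
  fixes n N :: nat
  assumes "1 \<le> n" and "n \<le> N"
  shows "eta1 n N = real n / real N \<and>
    (\<forall>F G. dual_pair n N F G \<longrightarrow>
       (((F, G) \<in> N1 n N \<longleftrightarrow>
           (\<forall>i\<in>{1..N}. vnorm (F i) * vnorm (G i) = real n / real N)) \<and>
        ((F, G) \<in> N1 n N \<longrightarrow>
           (\<forall>i\<in>{1..N}. ip (F i) (G i) = complex_of_real (real n / real N))))) \<and>
    (\<exists>n' N' F G. 1 \<le> n' \<and> n' \<le> N' \<and> dual_pair n' N' F G \<and>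
       (\<forall>i\<in>{1..N'}. ip (F i) (G i) = complex_of_real (real n' / real N')) \<and>
       (F, G) \<notin> N1 n' N')"
proof (intro conjI allI impI)
  show "eta1 n N = real n / real N" by (rule eta1_eq[OF assms])
  fix F G assume dp: "dual_pair n N F G"
  show "(F, G) \<in> N1 n N \<longleftrightarrow> (\<forall>i\<in>{1..N}. vnorm (F i) * vnorm (G i) = real n / real N)"
    using mem_N1_iff[OF assms dp] eta1_FG_eq_iff[OF assms dp] by simp
  show "(F, G) \<in> N1 n N \<Longrightarrow> \<forall>i\<in>{1..N}. ip (F i) (G i) = complex_of_real (real n / real N)"
    using mem_N1_iff[OF assms dp] ip_eq_of_eta1_FG_eq[OF assms dp] by simp
next
  show "\<exists>n' N' F G. 1 \<le> n' \<and> n' \<le> N' \<and> dual_pair n' N' F G \<and>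
       (\<forall>i\<in>{1..N'}. ip (F i) (G i) = complex_of_real (real n' / real N')) \<and>
       (F, G) \<notin> N1 n' N'"
    using dual_pair_skew ip_skew_frame_dual skew_not_in_N1
    by (intro exI[of _ 2] exI[of _ skew_frame] exI[of _ skew_dual]) auto
qed

end
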